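(* Let $\mathbf{C}$ be a category of $\mathbf{FI}$ type, let $M_\bullet,N_\bullet$ be free $\mathbf{C}$-modules over $\mathbb{C}$ of respective degrees $\leq c_1$ and $\leq c_2$, and let $X_\bullet\subseteq N_\bullet$ be any $\mathbf{C}$-submodule. Then the canonical extension maps $\Psi_d^e:\mathrm{Hom}_{G_d}(M_d,X_d)\to\mathrm{Hom}_{G_e}(M_e,X_e)$ are injective for all objects $e\geq d\geq c_1+c_2$.
   Context: A category $\mathbf{C}$ is of $\mathbf{FI}$ type if: (1) all Hom-sets are finite; (2) every morphism is a monomorphism and every endomorphism is an isomorphism; (3) for all objects $c,d$ the group $G_d=\mathrm{Aut}_{\mathbf{C}}(d)$ acts transitively on $\mathrm{Hom}_{\mathbf{C}}(c,d)$; (4) for every $d$ only finitely many isomorphism classes of $c$ have $\mathrm{Hom}(c,d)\neq\emptyset$; (5) every pair $c_1\to d\leftarrow c_2$ has a pullback, and every pair $f_i:p\to c_i$ has a weak push-out, i.e. a commutative pullback square $g_i:c_i\to d$ such that for every other pullback square $h_i:c_i\to z$ with $h_1f_1=h_2f_2$ there is a unique $h:d\to z$ with $hg_i=h_i$. Write $c\leq d$ if $\mathrm{Hom}(c,d)\neq\emptyset$. Write $d\geq c_1+c_2$ if $w\leq d$ for every weak push-out object $w$ of any pair of morphisms $p\to c_1$, $p\to c_2$. A $\mathbf{C}$-module is a functor to complex vector spaces. For a finite-dimensional $G_c$-representation $V$, $\mathrm{Ind}_c(V)$ is $d\mapsto\mathbb{C}[\mathrm{Hom}(c,d)]\otimes_{\mathbb{C}[G_c]}V$.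 A free module is a finite direct sum of these, of degree $\leq d$ if each summand $\mathrm{Ind}_c(V)$ ($V\neq0$) has $c\leq d$. For a free module $M$ and any module $X$, the spaces $\mathrm{Hom}_{G_d}(M_d,X_d)$ form a $\mathbf{C}$-module (functorial and left exact in $X$), obtained as the coinvariants $(M^*\otimes X)_d/G_d$ where $M^*=\bigoplus\mathrm{Ind}_{c_i}(V_i^* )$ for $M=\bigoplus\mathrm{Ind}_{c_i}(V_i)$; $\Psi_d^e$ denotes its structure map for $d\leq e$. *)

theory Defs
  imports Complex_Main
begin

record ('o,'m) category =
  Obj  :: "'o set"
  Arr  :: "'m set"
  Dom  :: "'m \<Rightarrow> 'o"
  Cod  :: "'m \<Rightarrow> 'o"
  Comp :: "'m \<Rightarrow> 'm \<Rightarrow> 'm"   (* Comp C g f = g o f *)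
  Idt  :: "'o \<Rightarrow> 'm"

definition Hom :: "('o,'m) category \<Rightarrow> 'o \<Rightarrow> 'o \<Rightarrow> 'm set" where
  "Hom C c d = {f \<in> Arr C. Dom C f = c \<and> Cod C f = d}"

definition Aut :: "('o,'m) category \<Rightarrow> 'o \<Rightarrow> 'm set" where
  "Aut C d = Hom C d d"

definition is_category :: "('o,'m) category \<Rightarrow> bool" where
  "is_category C \<longleftrightarrow>
     (\<forall>f\<in>Arr C. Dom C f \<in> Obj C \<and> Cod C f \<in> Obj C) \<and>
     (\<forall>c\<in>Obj C. Idt C c \<in> Hom C c c) \<and>
     (\<forall>f\<in>Arr C. \<forall>g\<in>Arr C. Cod C f = Dom C g \<longrightarrow>
         Comp C g f \<in> Hom C (Dom C f) (Cod C g)) \<and>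
     (\<forall>f\<in>Arr C. Comp C (Idt C (Cod C f)) f = f \<and> Comp C f (Idt C (Dom C f)) = f) \<and>
     (\<forall>f\<in>Arr C. \<forall>g\<in>Arr C. \<forall>h\<in>Arr C. Cod C f = Dom C g \<longrightarrow> Cod C g = Dom C h \<longrightarrow>
         Comp C h (Comp C g f) = Comp C (Comp C h g) f)"

definition isomorphic :: "('o,'m) category \<Rightarrow> 'o \<Rightarrow> 'o \<Rightarrow> bool" where
  "isomorphic C c c' \<longleftrightarrow> (\<exists>f\<in>Hom C c c'. \<exists>g\<in>Hom C c' c.
      Comp C g f = Idt C c \<and> Comp C f g = Idt C c')"

definition is_pullback :: "('o,'m) category \<Rightarrow> 'm \<Rightarrow> 'm \<Rightarrow> 'o \<Rightarrow> 'm \<Rightarrow> 'm \<Rightarrow> bool" where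
  "is_pullback C f1 f2 p p1 p2 \<longleftrightarrow>
     f1 \<in> Arr C \<and> f2 \<in> Arr C \<and> Cod C f1 = Cod C f2 \<and> p \<in> Obj C \<and>
     p1 \<in> Hom C p (Dom C f1) \<and> p2 \<in> Hom C p (Dom C f2) \<and>
     Comp C f1 p1 = Comp C f2 p2 \<and>
     (\<forall>q q1 q2. q \<in> Obj C \<and> q1 \<in> Hom C q (Dom C f1) \<and> q2 \<in> Hom C q (Dom C f2) \<and>
        Comp C f1 q1 = Comp C f2 q2 \<longrightarrow>
        (\<exists>!u. u \<in> Hom C q p \<and> Comp C p1 u = q1 \<and> Comp C p2 u = q2))"

definition weak_pushout :: "('o,'m) category \<Rightarrow> 'm \<Rightarrow> 'm \<Rightarrow> 'o \<Rightarrow> 'm \<Rightarrow> 'm \<Rightarrow> bool" where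
  "weak_pushout C f1 f2 d g1 g2 \<longleftrightarrow>
     f1 \<in> Arr C \<and> f2 \<in> Arr C \<and> Dom C f1 = Dom C f2 \<and> d \<in> Obj C \<and>
     g1 \<in> Hom C (Cod C f1) d \<and> g2 \<in> Hom C (Cod C f2) d \<and>
     is_pullback C g1 g2 (Dom C f1) f1 f2 \<and>
     (\<forall>z h1 h2. z \<in> Obj C \<and> h1 \<in> Hom C (Cod C f1) z \<and> h2 \<in> Hom C (Cod C f2) z \<and>
        is_pullback C h1 h2 (Dom C f1) f1 f2 \<longrightarrow>
        (\<exists>!h. h \<in> Hom C d z \<and> Comp C h g1 = h1 \<and> Comp C h g2 = h2))"

definition FI_type :: "('o,'m) category \<Rightarrow> bool" where
  "FI_type C \<longleftrightarrow>
     is_category C \<and>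
     \<comment> \<open>(1) finite Hom-sets\<close>
     (\<forall>c\<in>Obj C. \<forall>d\<in>Obj C. finite (Hom C c d)) \<and>
     \<comment> \<open>(2) every morphism is mono, every endomorphism an isomorphism\<close>
     (\<forall>f\<in>Arr C. \<forall>g\<in>Arr C. \<forall>h\<in>Arr C. Cod C g = Dom C f \<and> Cod C h = Dom C f \<and>
         Dom C g = Dom C h \<and> Comp C f g = Comp C f h \<longrightarrow> g = h) \<and>
     (\<forall>d\<in>Obj C. \<forall>f\<in>Hom C d d. \<exists>g\<in>Hom C d d. Comp C g f = Idt C d \<and> Comp C f g = Idt C d) \<and>
     \<comment> \<open>(3) Aut(d) acts transitively on Hom(c,d)\<close>
     (\<forall>c\<in>Obj C. \<forall>d\<in>Obj C. \<forall>f\<in>Hom C c d. \<forall>f'\<in>Hom C c d. \<exists>g\<in>Aut C d. f' = Comp C g f) \<and>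
     \<comment> \<open>(4) finitely many isomorphism classes below each object\<close>
     (\<forall>d\<in>Obj C. \<exists>S. finite S \<and> S \<subseteq> Obj C \<and>
         (\<forall>c\<in>Obj C. Hom C c d \<noteq> {} \<longrightarrow> (\<exists>s\<in>S. isomorphic C c s))) \<and>
     \<comment> \<open>(5) pullbacks and weak push-outs\<close>
     (\<forall>c1 c2 d f1 f2. f1 \<in> Hom C c1 d \<and> f2 \<in> Hom C c2 d \<longrightarrow>
         (\<exists>p p1 p2. is_pullback C f1 f2 p p1 p2)) \<and>
     (\<forall>p c1 c2 f1 f2. f1 \<in> Hom C p c1 \<and> f2 \<in> Hom C p c2 \<longrightarrow>
         (\<exists>d g1 g2. weak_pushout C f1 f2 d g1 g2))"

definition obj_le :: "('o,'m) category \<Rightarrow> 'o \<Rightarrow> 'o \<Rightarrow> bool" where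
  "obj_le C c d \<longleftrightarrow> Hom C c d \<noteq> {}"

definition geq_sum :: "('o,'m) category \<Rightarrow> 'o \<Rightarrow> 'o \<Rightarrow> 'o \<Rightarrow> bool" where
  "geq_sum C d c1 c2 \<longleftrightarrow>
     (\<forall>p f1 f2 w g1 g2. f1 \<in> Hom C p c1 \<and> f2 \<in> Hom C p c2 \<and> weak_pushout C f1 f2 w g1 g2
        \<longrightarrow> obj_le C w d)"

text \<open>The space C^n, realised as functions nat => complex vanishing from n on.\<close>
definition vspace :: "nat \<Rightarrow> (nat \<Rightarrow> complex) set" where
  "vspace n = {v. \<forall>j\<ge>n. v j = 0}"

definition is_rep :: "('o,'m) category \<Rightarrow> 'o \<Rightarrow> nat \<Rightarrow> ('m \<Rightarrow> (nat \<Rightarrow> complex) \<Rightarrow> (nat \<Rightarrow> complex)) \<Rightarrow> bool" where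
  "is_rep C c n \<rho> \<longleftrightarrow>
     (\<forall>g\<in>Aut C c. \<forall>v\<in>vspace n. \<rho> g v \<in> vspace n) \<and>
     (\<forall>g\<in>Aut C c. \<forall>v\<in>vspace n. \<forall>w\<in>vspace n. \<forall>a.
         \<rho> g (\<lambda>j. a * v j + w j) = (\<lambda>j. a * \<rho> g v j + \<rho> g w j)) \<and>
     (\<forall>v\<in>vspace n. \<rho> (Idt C c) v = v) \<and>
     (\<forall>g\<in>Aut C c. \<forall>g'\<in>Aut C c. \<forall>v\<in>vspace n. \<rho> (Comp C g g') v = \<rho> g (\<rho> g' v))"

text \<open>A free module is given by the list of its summands Ind_c(V), each a triple (c, dim V, rho).
  Elements of a free module at an object d have type 'm elt: index of summand => morphism => vector.\<close>
type_synonym 'm elt = "nat \<Rightarrow> 'm \<Rightarrow> nat \<Rightarrow> complex"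
type_synonym ('o,'m) free_spec = "('o \<times> nat \<times> ('m \<Rightarrow> (nat \<Rightarrow> complex) \<Rightarrow> (nat \<Rightarrow> complex))) list"

definition ezero :: "'m elt" where
  "ezero = (\<lambda>i f j. 0)"

definition elin :: "complex \<Rightarrow> 'm elt \<Rightarrow> 'm elt \<Rightarrow> 'm elt" where
  "elin a x y = (\<lambda>i f j. a * x i f j + y i f j)"

definition valid_free :: "('o,'m) category \<Rightarrow> ('o,'m) free_spec \<Rightarrow> bool" where
  "valid_free C L \<longleftrightarrow> (\<forall>(c,n,\<rho>)\<in>set L. c \<in> Obj C \<and> is_rep C c n \<rho>)"

definition free_deg_le :: "('o,'m) category \<Rightarrow> ('o,'m) free_spec \<Rightarrow> 'o \<Rightarrow> bool" where
  "free_deg_le C L c0 \<longleftrightarrow> (\<forall>(c,n,\<rho>)\<in>set L. n > 0 \<longrightarrow> obj_le C c c0)"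

text \<open>The value at d of the free module: Ind_c(V)_d = C[Hom(c,d)] \<otimes>_{C[G_c]} V is realised
  (canonically isomorphically) as the G_c-equivariant functions
  psi : Hom(c,d) -> V with psi(f o g) = rho(g)^{-1} psi(f), i.e. rho(g)(psi(f o g)) = psi(f);
  here f \<otimes> v corresponds to the function supported on f G_c with f o g |-> rho(g^{-1}) v.\<close>
definition fmod :: "('o,'m) category \<Rightarrow> ('o,'m) free_spec \<Rightarrow> 'o \<Rightarrow> 'm elt set" where
  "fmod C L d = {\<psi>. (\<forall>i\<ge>length L. \<forall>f j. \<psi> i f j = 0) \<and>
     (\<forall>i<length L. case L ! i of (c,n,\<rho>) \<Rightarrow>
        (\<forall>f. f \<notin> Hom C c d \<longrightarrow> (\<forall>j. \<psi> i f j = 0)) \<and>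
        (\<forall>f\<in>Hom C c d. \<psi> i f \<in> vspace n) \<and>
        (\<forall>f\<in>Hom C c d. \<forall>g\<in>Aut C c. \<rho> g (\<psi> i (Comp C f g)) = \<psi> i f))}"

text \<open>Structure map M(h) : M_d -> M_e for h : d -> e (induced by f \<otimes> v |-> (h o f) \<otimes> v).\<close>
definition fmap :: "('o,'m) category \<Rightarrow> ('o,'m) free_spec \<Rightarrow> 'm \<Rightarrow> 'm elt \<Rightarrow> 'm elt" where
  "fmap C L h \<psi> = (\<lambda>i k.
     if i < length L \<and> (\<exists>f\<in>Hom C (fst (L ! i)) (Dom C h). k = Comp C h f)
     then \<psi> i (THE f. f \<in> Hom C (fst (L ! i)) (Dom C h) \<and> k = Comp C h f)
     else (\<lambda>j. 0))"

text \<open>The transpose of M^*(h) under the canonical pairing Ind_c(V^*)_d x Ind_c(V)_d -> C: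
  restriction M_e -> M_d along h : d -> e.\<close>
definition fdag :: "('o,'m) category \<Rightarrow> ('o,'m) free_spec \<Rightarrow> 'm \<Rightarrow> 'm elt \<Rightarrow> 'm elt" where
  "fdag C L h \<psi> = (\<lambda>i f.
     if i < length L \<and> f \<in> Hom C (fst (L ! i)) (Dom C h) then \<psi> i (Comp C h f) else (\<lambda>j. 0))"

definition is_submodule :: "('o,'m) category \<Rightarrow> ('o,'m) free_spec \<Rightarrow> ('o \<Rightarrow> 'm elt set) \<Rightarrow> bool" where
  "is_submodule C L X \<longleftrightarrow>
     (\<forall>d\<in>Obj C. X d \<subseteq> fmod C L d \<and> ezero \<in> X d \<and>
        (\<forall>x\<in>X d. \<forall>y\<in>X d. \<forall>a. elin a x y \<in> X d)) \<and>
     (\<forall>c d h. h \<in> Hom C c d \<longrightarrow> fmap C L h ` X c \<subseteq> X d)"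

text \<open>Hom_{G_d}(M_d, X_d): G_d-equivariant linear maps M_d -> X_d (extensional: 0 outside M_d).\<close>
definition HomG :: "('o,'m) category \<Rightarrow> ('o,'m) free_spec \<Rightarrow> ('o,'m) free_spec \<Rightarrow>
    ('o \<Rightarrow> 'm elt set) \<Rightarrow> 'o \<Rightarrow> ('m elt \<Rightarrow> 'm elt) set" where
  "HomG C LM LN X d = {T.
     (\<forall>m. m \<notin> fmod C LM d \<longrightarrow> T m = ezero) \<and>
     (\<forall>m\<in>fmod C LM d. T m \<in> X d) \<and>
     (\<forall>m\<in>fmod C LM d. \<forall>m'\<in>fmod C LM d. \<forall>a. T (elin a m m') = elin a (T m) (T m')) \<and>
     (\<forall>g\<in>Aut C d. \<forall>m\<in>fmod C LM d. T (fmap C LM g m) = fmap C LN g (T m))}"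

text \<open>The structure map Psi_d^e of the C-module (M^* \<otimes> X)_d / G_d, transported to
  Hom_{G_d}(M_d,X_d) = ((M^* \<otimes> X)_d)^{G_d}: T is pushed forward along some h : d -> e
  (giving X(h) o T o h^dagger in M^*_e \<otimes> X_e = Hom(M_e,X_e)), and its coinvariant class is
  identified with an invariant by averaging over G_e.\<close>
definition Psi :: "('o,'m) category \<Rightarrow> ('o,'m) free_spec \<Rightarrow> ('o,'m) free_spec \<Rightarrow>
    'o \<Rightarrow> 'o \<Rightarrow> ('m elt \<Rightarrow> 'm elt) \<Rightarrow> ('m elt \<Rightarrow> 'm elt)" where
  "Psi C LM LN d e T = (\<lambda>m.
     if m \<in> fmod C LM e then
       (let h = (SOME h. h \<in> Hom C d e) in
        (\<lambda>i f j. (1 / of_nat (card (Aut C e))) *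
           (\<Sum>g\<in>Aut C e. fmap C LN (Comp C g h) (T (fdag C LM (Comp C g h) m)) i f j)))
     else ezero)"

end

theory Submission
  imports Defs
begin

text \<open>Write \<open>m \<in> M\<^sub>d\<close> as a finite sum of elements supported on single orbits \<open>f0 \<circ> G\<^sub>c\<close>
  and fix \<open>h : d \<rightarrow> e\<close>. For such an \<open>m0\<close>, the value of \<open>\<Psi>(T)(h\<^sub>* m0)\<close> at \<open>h \<circ> f'\<close> is an
  average over \<open>g \<in> G\<^sub>e\<close> of terms that vanish unless both \<open>h \<circ> f0\<close> and \<open>h \<circ> f'\<close> factor
  through \<open>g \<circ> h\<close>. When they do, the two factorisations are related by an automorphism of \<open>d\<close>
  obtained from the weak push-out of a pullback, and \<open>G\<^sub>d\<close>-equivariance of \<open>T\<close> turns the term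
  into \<open>T(m0)\<close> at \<open>f'\<close>. Since \<open>g = 1\<close> always contributes, \<open>\<Psi>(T)(h\<^sub>* m0)\<close> at \<open>h \<circ> f'\<close> is a
  nonzero multiple of \<open>T(m0)\<close> at \<open>f'\<close>, so \<open>\<Psi>(T)\<close> determines \<open>T\<close>.\<close>

section \<open>Categories of FI type\<close>

locale FI_category =
  fixes C :: "('o,'m) category"
  assumes FI: "FI_type C"
begin

lemma is_category: "is_category C"
  using FI unfolding FI_type_def by (elim conjE) assumption

lemma Hom_objs: "f \<in> Hom C a b \<Longrightarrow> a \<in> Obj C \<and> b \<in> Obj C"
  using is_category unfolding is_category_def Hom_def by auto

lemma comp_in_Hom: "f \<in> Hom C a b \<Longrightarrow> g \<in> Hom C b c \<Longrightarrow> Comp C g f \<in> Hom C a c"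
  using is_category unfolding is_category_def Hom_def by auto

lemma comp_assoc:
  "f \<in> Hom C a b \<Longrightarrow> g \<in> Hom C b c \<Longrightarrow> k \<in> Hom C c x \<Longrightarrow>
    Comp C k (Comp C g f) = Comp C (Comp C k g) f"
  using is_category unfolding is_category_def Hom_def by auto

lemma Idt_in_Hom: "a \<in> Obj C \<Longrightarrow> Idt C a \<in> Hom C a a"
  using is_category unfolding is_category_def by auto

lemma comp_Idt_left: "f \<in> Hom C a b \<Longrightarrow> Comp C (Idt C b) f = f"
  using is_category unfolding is_category_def Hom_def by auto

lemma comp_Idt_right: "f \<in> Hom C a b \<Longrightarrow> Comp C f (Idt C a) = f"
  using is_category unfolding is_category_def Hom_def by auto

lemma mono_cancel:
  assumes "f \<in> Hom C b c" "g \<in> Hom C a b" "g' \<in> Hom C a b" "Comp C f g = Comp C f g'"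
  shows "g = g'"
proof -
  have "\<forall>f\<in>Arr C. \<forall>g\<in>Arr C. \<forall>h\<in>Arr C. Cod C g = Dom C f \<and> Cod C h = Dom C f \<and>
      Dom C g = Dom C h \<and> Comp C f g = Comp C f h \<longrightarrow> g = h"
    using FI unfolding FI_type_def by (elim conjE) assumption
  then show ?thesis
    using assms unfolding Hom_def by auto
qed

lemma Aut_inverse:
  assumes "g \<in> Aut C a"
  shows "\<exists>g'\<in>Aut C a. Comp C g' g = Idt C a \<and> Comp C g g' = Idt C a"
proof -
  have "\<forall>d\<in>Obj C. \<forall>f\<in>Hom C d d. \<exists>g\<in>Hom C d d. Comp C g f = Idt C d \<and> Comp C f g = Idt C d"
    using FI unfolding FI_type_def by (elim conjE) assumption
  then show ?thesis
    using assms Hom_objs unfolding Aut_def by blast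
qed

lemma Aut_transitive:
  assumes "f \<in> Hom C c d" "f' \<in> Hom C c d"
  shows "\<exists>g\<in>Aut C d. f' = Comp C g f"
proof -
  have "\<forall>c\<in>Obj C. \<forall>d\<in>Obj C. \<forall>f\<in>Hom C c d. \<forall>f'\<in>Hom C c d. \<exists>g\<in>Aut C d. f' = Comp C g f"
    using FI unfolding FI_type_def by (elim conjE) assumption
  then show ?thesis
    using assms Hom_objs by blast
qed

lemma finite_Hom: "a \<in> Obj C \<Longrightarrow> b \<in> Obj C \<Longrightarrow> finite (Hom C a b)"
  using FI unfolding FI_type_def by (elim conjE) blast

lemma pullback_exists:
  "f1 \<in> Hom C c1 d \<Longrightarrow> f2 \<in> Hom C c2 d \<Longrightarrow> \<exists>p p1 p2. is_pullback C f1 f2 p p1 p2"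
  using FI unfolding FI_type_def by (elim conjE) metis

lemma weak_pushout_exists:
  "f1 \<in> Hom C p c1 \<Longrightarrow> f2 \<in> Hom C p c2 \<Longrightarrow> \<exists>d g1 g2. weak_pushout C f1 f2 d g1 g2"
  using FI unfolding FI_type_def by (elim conjE) metis

lemma comp_Aut_cancel:
  assumes "f \<in> Hom C c x" "g \<in> Aut C c"
  obtains g' where "g' \<in> Aut C c" "Comp C (Comp C f g) g' = f"
proof -
  obtain g' where g': "g' \<in> Aut C c" "Comp C g g' = Idt C c"
    using Aut_inverse[OF assms(2)] by blast
  have "Comp C (Comp C f g) g' = Comp C f (Comp C g g')"
    using comp_assoc assms g'(1) unfolding Aut_def by metis
  then show ?thesis
    using that g' comp_Idt_right[OF assms(1)] by simp
qed

lemma Aut_comp_surj: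
  assumes b: "b \<in> Aut C d" and f: "f \<in> Hom C c d"
  obtains f' where "f' \<in> Hom C c d" "Comp C b f' = f"
proof -
  obtain b' where b': "b' \<in> Aut C d" "Comp C b b' = Idt C d"
    using Aut_inverse[OF b] by blast
  have bd: "b \<in> Hom C d d" and b'd: "b' \<in> Hom C d d"
    using b b'(1) unfolding Aut_def by auto
  have "Comp C b (Comp C b' f) = f"
    using comp_assoc[OF f b'd bd] b'(2) comp_Idt_left[OF f] by simp
  then show ?thesis
    using that comp_in_Hom[OF f b'd] by blast
qed

lemma factors_through_comp_Aut:
  assumes u: "u \<in> Hom C d e" and k: "k \<in> Hom C c e" and g: "g \<in> Aut C c"
    and f: "f \<in> Hom C c d" and eq: "Comp C k g = Comp C u f"
  shows "\<exists>f'\<in>Hom C c d. k = Comp C u f'"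
proof -
  obtain g' where g': "g' \<in> Aut C c" "Comp C (Comp C k g) g' = k"
    using comp_Aut_cancel[OF k g] by blast
  then have g'c: "g' \<in> Hom C c c"
    unfolding Aut_def by simp
  have "k = Comp C u (Comp C f g')"
    using g' eq comp_assoc[OF g'c f u] by simp
  then show ?thesis
    using comp_in_Hom[OF g'c f] by blast
qed

lemma pullback_transfer:
  assumes u: "u \<in> Hom C d e" and h: "h \<in> Hom C d e"
    and f0: "f0 \<in> Hom C c d" and f1: "f1 \<in> Hom C c d"
    and f': "f' \<in> Hom C c' d" and f'': "f'' \<in> Hom C c' d"
    and e1: "Comp C u f1 = Comp C h f0" and e2: "Comp C u f'' = Comp C h f'"
    and pb: "is_pullback C f0 f' p p1 p2"
  shows "is_pullback C f1 f'' p p1 p2"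
proof -
  have comm_iff: "Comp C f1 q1 = Comp C f'' q2 \<longleftrightarrow> Comp C f0 q1 = Comp C f' q2"
    if q1: "q1 \<in> Hom C q c" and q2: "q2 \<in> Hom C q c'" for q q1 q2
  proof -
    have "Comp C u (Comp C f1 q1) = Comp C h (Comp C f0 q1)"
      using comp_assoc[OF q1 f1 u] comp_assoc[OF q1 f0 h] e1 by simp
    moreover have "Comp C u (Comp C f'' q2) = Comp C h (Comp C f' q2)"
      using comp_assoc[OF q2 f'' u] comp_assoc[OF q2 f' h] e2 by simp
    moreover have "Comp C f0 q1 \<in> Hom C q d" "Comp C f1 q1 \<in> Hom C q d"
      "Comp C f' q2 \<in> Hom C q d" "Comp C f'' q2 \<in> Hom C q d"
      using comp_in_Hom q1 q2 f0 f1 f' f'' by auto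
    ultimately show ?thesis
      using mono_cancel[OF u] mono_cancel[OF h] by metis
  qed
  have dom_cod: "Dom C f0 = c" "Dom C f1 = c" "Dom C f' = c'" "Dom C f'' = c'"
    "Cod C f1 = d" "Cod C f'' = d"
    using f0 f1 f' f'' unfolding Hom_def by auto
  show ?thesis
    unfolding is_pullback_def dom_cod
  proof (intro conjI allI impI)
    show "f1 \<in> Arr C" "f'' \<in> Arr C" "d = d"
      using f1 f'' unfolding Hom_def by auto
    show "p \<in> Obj C" "p1 \<in> Hom C p c" "p2 \<in> Hom C p c'" "Comp C f1 p1 = Comp C f'' p2"
      using pb comm_iff unfolding is_pullback_def dom_cod by auto
  next
    fix q q1 q2
    assume "q \<in> Obj C \<and> q1 \<in> Hom C q c \<and> q2 \<in> Hom C q c' \<and> Comp C f1 q1 = Comp C f'' q2"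
    then show "\<exists>!v. v \<in> Hom C q p \<and> Comp C p1 v = q1 \<and> Comp C p2 v = q2"
      using pb comm_iff unfolding is_pullback_def dom_cod by blast
  qed
qed

text \<open>The weak push-out of a pullback of \<open>(f0, f')\<close> maps to \<open>d\<close> through both squares, each
  being a pullback square; transitivity of \<open>G\<^sub>d\<close> on maps out of the weak push-out gives \<open>b\<close>.\<close>
lemma Aut_transport_pair:
  assumes u: "u \<in> Hom C d e" and h: "h \<in> Hom C d e"
    and f0: "f0 \<in> Hom C c d" and f1: "f1 \<in> Hom C c d"
    and f': "f' \<in> Hom C c' d" and f'': "f'' \<in> Hom C c' d"
    and e1: "Comp C u f1 = Comp C h f0" and e2: "Comp C u f'' = Comp C h f'"
  shows "\<exists>b\<in>Aut C d. Comp C b f0 = f1 \<and> Comp C b f' = f''"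
proof -
  obtain p p1 p2 where pb0: "is_pullback C f0 f' p p1 p2"
    using pullback_exists[OF f0 f'] by blast
  have pb1: "is_pullback C f1 f'' p p1 p2"
    using pullback_transfer[OF u h f0 f1 f' f'' e1 e2 pb0] .
  have p1: "p1 \<in> Hom C p c" and p2: "p2 \<in> Hom C p c'"
    using pb0 f0 f' unfolding is_pullback_def Hom_def by auto
  then have dom_cod: "Dom C p1 = p" "Cod C p1 = c" "Cod C p2 = c'"
    unfolding Hom_def by auto
  obtain w g1 g2 where wp: "weak_pushout C p1 p2 w g1 g2"
    using weak_pushout_exists[OF p1 p2] by blast
  have d: "d \<in> Obj C"
    using Hom_objs[OF f0] by blast
  have "\<exists>!k. k \<in> Hom C w d \<and> Comp C k g1 = f0 \<and> Comp C k g2 = f'"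
    using wp pb0 d f0 f' unfolding weak_pushout_def dom_cod by blast
  then obtain k0 where k0: "k0 \<in> Hom C w d" "Comp C k0 g1 = f0" "Comp C k0 g2 = f'"
    by blast
  have "\<exists>!k. k \<in> Hom C w d \<and> Comp C k g1 = f1 \<and> Comp C k g2 = f''"
    using wp pb1 d f1 f'' unfolding weak_pushout_def dom_cod by blast
  then obtain k1 where k1: "k1 \<in> Hom C w d" "Comp C k1 g1 = f1" "Comp C k1 g2 = f''"
    by blast
  have g1: "g1 \<in> Hom C c w" and g2: "g2 \<in> Hom C c' w"
    using wp unfolding weak_pushout_def dom_cod by auto
  obtain b where b: "b \<in> Aut C d" "k1 = Comp C b k0"
    using Aut_transitive[OF k0(1) k1(1)] by blast
  have "b \<in> Hom C d d"
    using b(1) unfolding Aut_def .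
  then have "Comp C b f0 = f1" "Comp C b f' = f''"
    using b(2) k0 k1 comp_assoc[OF g1 k0(1)] comp_assoc[OF g2 k0(1)] by auto
  then show ?thesis
    using b(1) by blast
qed

end

section \<open>Free modules\<close>

definition summand_obj :: "('o,'m) free_spec \<Rightarrow> nat \<Rightarrow> 'o" where
  "summand_obj L i = fst (L ! i)"

definition summand_dim :: "('o,'m) free_spec \<Rightarrow> nat \<Rightarrow> nat" where
  "summand_dim L i = fst (snd (L ! i))"

definition summand_rep :: "('o,'m) free_spec \<Rightarrow> nat \<Rightarrow> 'm \<Rightarrow> (nat \<Rightarrow> complex) \<Rightarrow> (nat \<Rightarrow> complex)" where
  "summand_rep L i = snd (snd (L ! i))"

lemma valid_free_summand:
  assumes "valid_free C L" "i < length L"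
  shows "summand_obj L i \<in> Obj C"
    and "is_rep C (summand_obj L i) (summand_dim L i) (summand_rep L i)"
  using assms nth_mem[OF assms(2)]
  unfolding valid_free_def summand_obj_def summand_dim_def summand_rep_def
  by (auto simp: case_prod_beta)

lemma zero_in_vspace: "(\<lambda>j. 0) \<in> vspace n"
  unfolding vspace_def by simp

lemma is_rep_linear:
  assumes "is_rep C c n \<rho>" "g \<in> Aut C c" "v \<in> vspace n" "w \<in> vspace n"
  shows "\<rho> g (\<lambda>j. a * v j + w j) = (\<lambda>j. a * \<rho> g v j + \<rho> g w j)"
  using assms unfolding is_rep_def by blast

lemma is_rep_zero:
  assumes "is_rep C c n \<rho>" "g \<in> Aut C c"
  shows "\<rho> g (\<lambda>j. 0) = (\<lambda>j. 0)"
  using is_rep_linear[OF assms zero_in_vspace zero_in_vspace, of "-1"] by simp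

lemma fmod_iff:
  "\<psi> \<in> fmod C L d \<longleftrightarrow> (\<forall>i\<ge>length L. \<forall>f j. \<psi> i f j = 0) \<and>
    (\<forall>i<length L. (\<forall>f. f \<notin> Hom C (summand_obj L i) d \<longrightarrow> (\<forall>j. \<psi> i f j = 0)) \<and>
      (\<forall>f\<in>Hom C (summand_obj L i) d. \<psi> i f \<in> vspace (summand_dim L i)) \<and>
      (\<forall>f\<in>Hom C (summand_obj L i) d. \<forall>g\<in>Aut C (summand_obj L i).
         summand_rep L i g (\<psi> i (Comp C f g)) = \<psi> i f))"
  unfolding fmod_def summand_obj_def summand_dim_def summand_rep_def by (simp add: case_prod_beta)

lemma fmod_zero_outside:
  "\<psi> \<in> fmod C L d \<Longrightarrow> \<not> (i < length L \<and> f \<in> Hom C (summand_obj L i) d) \<Longrightarrow> \<psi> i f = (\<lambda>j. 0)"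
  unfolding fmod_iff by (cases "i < length L") auto

lemma fmod_vspace:
  "\<psi> \<in> fmod C L d \<Longrightarrow> i < length L \<Longrightarrow> f \<in> Hom C (summand_obj L i) d \<Longrightarrow>
    \<psi> i f \<in> vspace (summand_dim L i)"
  unfolding fmod_iff by auto

lemma fmod_equivariant:
  "\<psi> \<in> fmod C L d \<Longrightarrow> i < length L \<Longrightarrow> f \<in> Hom C (summand_obj L i) d \<Longrightarrow>
    g \<in> Aut C (summand_obj L i) \<Longrightarrow> summand_rep L i g (\<psi> i (Comp C f g)) = \<psi> i f"
  unfolding fmod_iff by auto

lemma ezero_in_fmod: "valid_free C L \<Longrightarrow> ezero \<in> fmod C L d"
  unfolding fmod_iff ezero_def using is_rep_zero[OF valid_free_summand(2)] zero_in_vspace by auto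

lemma fdag_apply:
  "u \<in> Hom C d e \<Longrightarrow> fdag C L u m i f =
    (if i < length L \<and> f \<in> Hom C (summand_obj L i) d then m i (Comp C u f) else (\<lambda>j. 0))"
  unfolding fdag_def Hom_def summand_obj_def by auto

lemma fmap_outside_image:
  "u \<in> Hom C d e \<Longrightarrow> \<not> (\<exists>f\<in>Hom C (summand_obj L i) d. k = Comp C u f) \<Longrightarrow>
    fmap C L u \<psi> i k = (\<lambda>j. 0)"
  unfolding fmap_def Hom_def summand_obj_def by auto

lemma fmap_ezero: "fmap C L u ezero = ezero"
  unfolding fmap_def ezero_def by auto

definition fmod_linear :: "('o,'m) category \<Rightarrow> ('o,'m) free_spec \<Rightarrow> 'o \<Rightarrow> ('m elt \<Rightarrow> 'm elt) \<Rightarrow> bool" where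
  "fmod_linear C L d T \<longleftrightarrow>
     (\<forall>m\<in>fmod C L d. \<forall>m'\<in>fmod C L d. \<forall>a. T (elin a m m') = elin a (T m) (T m'))"

lemma fmod_linear_ezero:
  fixes T :: "'m elt \<Rightarrow> 'm elt"
  assumes "valid_free C L" "fmod_linear C L d T"
  shows "T ezero = ezero"
proof -
  have "T (elin 1 ezero ezero) = elin 1 (T ezero) (T ezero)"
    using assms(2) ezero_in_fmod[OF assms(1)] unfolding fmod_linear_def by blast
  moreover have "elin 1 ezero ezero = (ezero :: 'm elt)"
    unfolding elin_def ezero_def by simp
  ultimately have eq: "T ezero = elin 1 (T ezero) (T ezero)"
    by simp
  show ?thesis
  proof (rule ext, rule ext, rule ext)
    fix i f j
    have "T ezero i f j = T ezero i f j + T ezero i f j"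
      using fun_cong[OF fun_cong[OF fun_cong[OF eq, of i], of f], of j] unfolding elin_def mult_1 .
    then show "T ezero i f j = ezero i f j"
      unfolding ezero_def by simp
  qed
qed

definition equivariant_linear ::
    "('o,'m) category \<Rightarrow> ('o,'m) free_spec \<Rightarrow> ('o,'m) free_spec \<Rightarrow> 'o \<Rightarrow> ('m elt \<Rightarrow> 'm elt) \<Rightarrow> bool" where
  "equivariant_linear C LM LN d T \<longleftrightarrow>
     (\<forall>m\<in>fmod C LM d. T m \<in> fmod C LN d) \<and> fmod_linear C LM d T \<and>
     (\<forall>g\<in>Aut C d. \<forall>m\<in>fmod C LM d. T (fmap C LM g m) = fmap C LN g (T m))"

lemma HomG_equivariant_linear:
  assumes "is_submodule C LN X" "d \<in> Obj C" "T \<in> HomG C LM LN X d"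
  shows "equivariant_linear C LM LN d T"
  using assms unfolding is_submodule_def HomG_def equivariant_linear_def fmod_linear_def by blast

context FI_category
begin

lemma fmap_apply:
  assumes u: "u \<in> Hom C d e" and f: "f \<in> Hom C (summand_obj L i) d" and i: "i < length L"
  shows "fmap C L u \<psi> i (Comp C u f) = \<psi> i f"
proof -
  have D: "Dom C u = d"
    using u unfolding Hom_def by simp
  have "\<exists>f'\<in>Hom C (summand_obj L i) d. Comp C u f = Comp C u f'"
    using f by blast
  then have "fmap C L u \<psi> i (Comp C u f) =
      \<psi> i (THE x. x \<in> Hom C (summand_obj L i) d \<and> Comp C u f = Comp C u x)"
    using i unfolding fmap_def D summand_obj_def by simp
  also have "(THE x. x \<in> Hom C (summand_obj L i) d \<and> Comp C u f = Comp C u x) = f"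
  proof (rule the_equality)
    fix x
    assume "x \<in> Hom C (summand_obj L i) d \<and> Comp C u f = Comp C u x"
    then show "x = f"
      using mono_cancel[OF u f] by (elim conjE) (rule sym)
  qed (use f in simp)
  finally show ?thesis .
qed

lemma fmap_eq_zeroI:
  assumes u: "u \<in> Hom C d e"
    and zero: "\<And>f. f \<in> Hom C (summand_obj L i) d \<Longrightarrow> k = Comp C u f \<Longrightarrow> \<psi> i f = (\<lambda>j. 0)"
  shows "fmap C L u \<psi> i k = (\<lambda>j. 0)"
proof (cases "i < length L \<and> (\<exists>f\<in>Hom C (summand_obj L i) d. k = Comp C u f)")
  case True
  then obtain f where "i < length L" "f \<in> Hom C (summand_obj L i) d" "k = Comp C u f"
    by blast
  then show ?thesis
    using fmap_apply[OF u] zero by simp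
next
  case False
  then consider "\<not> i < length L" | "\<not> (\<exists>f\<in>Hom C (summand_obj L i) d. k = Comp C u f)"
    by blast
  then show ?thesis
  proof cases
    case 1
    then show ?thesis
      by (simp add: fmap_def)
  next
    case 2
    then show ?thesis
      by (rule fmap_outside_image[OF u])
  qed
qed

lemma fmap_in_fmod:
  assumes L: "valid_free C L" and u: "u \<in> Hom C d e" and \<psi>: "\<psi> \<in> fmod C L d"
  shows "fmap C L u \<psi> \<in> fmod C L e"
  unfolding fmod_iff
proof (intro conjI allI impI ballI)
  fix i f j
  assume "length L \<le> i"
  then show "fmap C L u \<psi> i f j = 0"
    unfolding fmap_def by simp
next
  fix i k
  assume i: "i < length L"
  let ?c = "summand_obj L i"
  show "fmap C L u \<psi> i k j = 0" if "k \<notin> Hom C ?c e" for j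
    using fmap_eq_zeroI[OF u] that comp_in_Hom[OF _ u] by metis
  show "fmap C L u \<psi> i k \<in> vspace (summand_dim L i)"
  proof (cases "\<exists>f\<in>Hom C ?c d. k = Comp C u f")
    case True
    then show ?thesis
      using fmap_apply[OF u _ i] fmod_vspace[OF \<psi> i] by auto
  next
    case False
    then show ?thesis
      using fmap_outside_image[OF u] zero_in_vspace by simp
  qed
  fix g
  assume k: "k \<in> Hom C ?c e" and g: "g \<in> Aut C ?c"
  have gc: "g \<in> Hom C ?c ?c"
    using g unfolding Aut_def .
  show "summand_rep L i g (fmap C L u \<psi> i (Comp C k g)) = fmap C L u \<psi> i k"
  proof (cases "\<exists>f\<in>Hom C ?c d. k = Comp C u f")
    case True
    then obtain f where f: "f \<in> Hom C ?c d" "k = Comp C u f"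
      by blast
    then have "Comp C k g = Comp C u (Comp C f g)"
      using comp_assoc[OF gc f(1) u] by simp
    then show ?thesis
      using fmap_apply[OF u comp_in_Hom[OF gc f(1)] i] fmap_apply[OF u f(1) i] f
        fmod_equivariant[OF \<psi> i f(1) g] by simp
  next
    case False
    then have "fmap C L u \<psi> i (Comp C k g) = (\<lambda>j. 0)"
      using fmap_eq_zeroI[OF u] factors_through_comp_Aut[OF u k g] by metis
    then show ?thesis
      using fmap_outside_image[OF u] False is_rep_zero[OF valid_free_summand(2)[OF L i] g] by simp
  qed
qed

lemma elin_in_fmod:
  assumes L: "valid_free C L" and x: "x \<in> fmod C L d" and y: "y \<in> fmod C L d"
  shows "elin a x y \<in> fmod C L d"
  unfolding fmod_iff
proof (intro conjI allI impI ballI)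
  fix i f j
  assume "length L \<le> i"
  then show "elin a x y i f j = 0"
    using fmod_zero_outside[OF x, of i f] fmod_zero_outside[OF y, of i f] unfolding elin_def by simp
next
  fix i f
  assume i: "i < length L"
  show "elin a x y i f j = 0" if "f \<notin> Hom C (summand_obj L i) d" for j
    using that fmod_zero_outside[OF x] fmod_zero_outside[OF y] unfolding elin_def by simp
  show "elin a x y i f \<in> vspace (summand_dim L i)" if f: "f \<in> Hom C (summand_obj L i) d"
    using fmod_vspace[OF x i f] fmod_vspace[OF y i f] unfolding elin_def vspace_def by simp
  fix g
  assume f: "f \<in> Hom C (summand_obj L i) d" and g: "g \<in> Aut C (summand_obj L i)"
  have fg: "Comp C f g \<in> Hom C (summand_obj L i) d"
    using comp_in_Hom[OF _ f] g unfolding Aut_def by blast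
  show "summand_rep L i g (elin a x y i (Comp C f g)) = elin a x y i f"
    using is_rep_linear[OF valid_free_summand(2)[OF L i] g fmod_vspace[OF x i fg] fmod_vspace[OF y i fg]]
      fmod_equivariant[OF x i f g] fmod_equivariant[OF y i f g]
    unfolding elin_def by simp
qed

end

section \<open>Decomposition into orbit-supported elements\<close>

definition right_orbit :: "('o,'m) category \<Rightarrow> 'o \<Rightarrow> 'm \<Rightarrow> 'm set" where
  "right_orbit C c f0 = (\<lambda>a. Comp C f0 a) ` Aut C c"

definition orbit_supported :: "('o,'m) category \<Rightarrow> ('o,'m) free_spec \<Rightarrow> nat \<Rightarrow> 'm \<Rightarrow> 'm elt \<Rightarrow> bool" where
  "orbit_supported C L k f0 m \<longleftrightarrow>
     (\<forall>i f. m i f \<noteq> (\<lambda>j. 0) \<longrightarrow> i = k \<and> f \<in> right_orbit C (summand_obj L k) f0)"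

definition orbit_restrict :: "('o,'m) category \<Rightarrow> ('o,'m) free_spec \<Rightarrow> (nat \<times> 'm) set \<Rightarrow> 'm elt \<Rightarrow> 'm elt" where
  "orbit_restrict C L A y = (\<lambda>i f.
     if \<exists>(k,f0)\<in>A. i = k \<and> f \<in> right_orbit C (summand_obj L k) f0 then y i f else (\<lambda>j. 0))"

lemma orbit_restrict_empty: "orbit_restrict C L {} y = ezero"
  unfolding orbit_restrict_def ezero_def by simp

lemma orbit_restrict_insert:
  "orbit_restrict C L (insert x A) y =
    elin 1 (orbit_restrict C L {x} (elin (-1) (orbit_restrict C L A y) y)) (orbit_restrict C L A y)"
  unfolding orbit_restrict_def elin_def by (auto simp: fun_eq_iff)

lemma orbit_supported_orbit_restrict: "orbit_supported C L k f0 (orbit_restrict C L {(k,f0)} y)"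
  unfolding orbit_supported_def orbit_restrict_def by auto

context FI_category
begin

lemma comp_Aut_in_right_orbit:
  assumes f0: "f0 \<in> Hom C c d" and f: "f \<in> right_orbit C c f0" and g: "g \<in> Aut C c"
  shows "Comp C f g \<in> right_orbit C c f0"
proof -
  obtain a where a: "a \<in> Aut C c" "f = Comp C f0 a"
    using f unfolding right_orbit_def by blast
  have ac: "a \<in> Hom C c c" and gc: "g \<in> Hom C c c"
    using a(1) g unfolding Aut_def by auto
  have "Comp C f g = Comp C f0 (Comp C a g)"
    using a comp_assoc[OF gc ac f0] by simp
  moreover have "Comp C a g \<in> Aut C c"
    using comp_in_Hom[OF gc ac] unfolding Aut_def .
  ultimately show ?thesis
    unfolding right_orbit_def by blast
qed

lemma comp_Aut_in_right_orbit_iff: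
  assumes f0: "f0 \<in> Hom C c d" and f: "f \<in> Hom C c d" and g: "g \<in> Aut C c"
  shows "Comp C f g \<in> right_orbit C c f0 \<longleftrightarrow> f \<in> right_orbit C c f0"
proof
  obtain g' where "g' \<in> Aut C c" "Comp C (Comp C f g) g' = f"
    using comp_Aut_cancel[OF f g] by blast
  then show "f \<in> right_orbit C c f0" if "Comp C f g \<in> right_orbit C c f0"
    using comp_Aut_in_right_orbit[OF f0 that] by metis
qed (rule comp_Aut_in_right_orbit[OF f0 _ g])

lemma in_right_orbit_self:
  assumes "f \<in> Hom C c d"
  shows "f \<in> right_orbit C c f"
proof -
  have "Idt C c \<in> Aut C c"
    using Idt_in_Hom Hom_objs[OF assms] unfolding Aut_def by blast
  then show ?thesis
    using comp_Idt_right[OF assms] unfolding right_orbit_def by force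
qed

lemma orbit_restrict_in_fmod:
  assumes L: "valid_free C L" and y: "y \<in> fmod C L d" and f0: "f0 \<in> Hom C (summand_obj L k) d"
  shows "orbit_restrict C L {(k,f0)} y \<in> fmod C L d"
  unfolding fmod_iff
proof (intro conjI allI impI ballI)
  fix i f j
  assume "length L \<le> i"
  then show "orbit_restrict C L {(k,f0)} y i f j = 0"
    using fmod_zero_outside[OF y, of i f] unfolding orbit_restrict_def by auto
next
  fix i f
  assume i: "i < length L"
  show "orbit_restrict C L {(k,f0)} y i f j = 0" if "f \<notin> Hom C (summand_obj L i) d" for j
    using that fmod_zero_outside[OF y] unfolding orbit_restrict_def by auto
  show "orbit_restrict C L {(k,f0)} y i f \<in> vspace (summand_dim L i)"
    if "f \<in> Hom C (summand_obj L i) d"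
    using that fmod_vspace[OF y i] zero_in_vspace unfolding orbit_restrict_def by auto
  fix g
  assume f: "f \<in> Hom C (summand_obj L i) d" and g: "g \<in> Aut C (summand_obj L i)"
  show "summand_rep L i g (orbit_restrict C L {(k,f0)} y i (Comp C f g)) = orbit_restrict C L {(k,f0)} y i f"
    using comp_Aut_in_right_orbit_iff[OF f0, of f g] f g fmod_equivariant[OF y i f g]
      is_rep_zero[OF valid_free_summand(2)[OF L i] g]
    unfolding orbit_restrict_def by auto
qed

lemma orbit_restrict_all:
  assumes y: "y \<in> fmod C L d"
  shows "orbit_restrict C L (SIGMA k:{..<length L}. Hom C (summand_obj L k) d) y = y"
proof (rule ext, rule ext)
  fix i f
  show "orbit_restrict C L (SIGMA k:{..<length L}. Hom C (summand_obj L k) d) y i f = y i f"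
  proof (cases "i < length L \<and> f \<in> Hom C (summand_obj L i) d")
    case True
    then have "f \<in> right_orbit C (summand_obj L i) f"
      using in_right_orbit_self by blast
    then show ?thesis
      using True unfolding orbit_restrict_def by auto
  next
    case False
    then show ?thesis
      using fmod_zero_outside[OF y] unfolding orbit_restrict_def by auto
  qed
qed

lemma eq_on_fmod_if_eq_on_orbit_supported:
  assumes L: "valid_free C L" and d: "d \<in> Obj C"
    and T1: "fmod_linear C L d T1" and T2: "fmod_linear C L d T2"
    and orbit_eq: "\<And>k f0 m. k < length L \<Longrightarrow> f0 \<in> Hom C (summand_obj L k) d \<Longrightarrow> m \<in> fmod C L d \<Longrightarrow>
      orbit_supported C L k f0 m \<Longrightarrow> T1 m = T2 m"
    and y: "y \<in> fmod C L d"
  shows "T1 y = T2 y"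
proof -
  define S where "S = (SIGMA k:{..<length L}. Hom C (summand_obj L k) d)"
  have "finite S"
    unfolding S_def using finite_Hom[OF valid_free_summand(1)[OF L] d] by auto
  have "orbit_restrict C L A y \<in> fmod C L d \<and> T1 (orbit_restrict C L A y) = T2 (orbit_restrict C L A y)"
    if "A \<subseteq> S" for A
    using finite_subset[OF that \<open>finite S\<close>] that
  proof (induction A rule: finite_induct)
    case empty
    show ?case
      using orbit_restrict_empty ezero_in_fmod[OF L] fmod_linear_ezero[OF L T1] fmod_linear_ezero[OF L T2]
      by metis
  next
    case (insert x A)
    obtain k f0 where x: "x = (k, f0)"
      by fastforce
    have k: "k < length L" and f0: "f0 \<in> Hom C (summand_obj L k) d"
      using insert.prems x unfolding S_def by auto
    let ?r = "orbit_restrict C L A y"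
    have r: "?r \<in> fmod C L d" "T1 ?r = T2 ?r"
      using insert by auto
    define p where "p = orbit_restrict C L {(k, f0)} (elin (-1) ?r y)"
    have p: "p \<in> fmod C L d"
      unfolding p_def using orbit_restrict_in_fmod[OF L elin_in_fmod[OF L r(1) y] f0] .
    have "orbit_supported C L k f0 p"
      unfolding p_def by (rule orbit_supported_orbit_restrict)
    then have "T1 p = T2 p"
      by (rule orbit_eq[OF k f0 p])
    moreover have "orbit_restrict C L (insert x A) y = elin 1 p ?r"
      unfolding x p_def by (rule orbit_restrict_insert)
    ultimately show ?case
      using elin_in_fmod[OF L p r(1)] T1 T2 p r unfolding fmod_linear_def by simp
  qed
  then have "T1 (orbit_restrict C L S y) = T2 (orbit_restrict C L S y)"
    by blast
  then show ?thesis
    using orbit_restrict_all[OF y] unfolding S_def by simp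
qed

end

section \<open>The averaged extension map\<close>

context FI_category
begin

lemma fmap_apply_supported:
  assumes u: "u \<in> Hom C d e" and h: "h \<in> Hom C d e" and bd: "b \<in> Hom C d d"
    and i: "i < length L" and f: "f \<in> Hom C (summand_obj L i) d"
    and supp: "\<And>i f. m i f \<noteq> (\<lambda>j. 0) \<Longrightarrow> Comp C u (Comp C b f) = Comp C h f"
  shows "fmap C L h m i (Comp C u (Comp C b f)) = m i f"
proof (cases "m i f = (\<lambda>j. 0)")
  case False
  then show ?thesis
    using supp fmap_apply[OF h f i] by simp
next
  case True
  have "m i f' = (\<lambda>j. 0)"
    if f': "f' \<in> Hom C (summand_obj L i) d" "Comp C u (Comp C b f) = Comp C h f'" for f'
  proof (rule ccontr)
    assume nz: "m i f' \<noteq> (\<lambda>j. 0)"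
    then have "Comp C u (Comp C b f) = Comp C u (Comp C b f')"
      using supp f'(2) by metis
    then have "f = f'"
      using mono_cancel[OF u] mono_cancel[OF bd f f'(1)] comp_in_Hom[OF _ bd] f f'(1) by metis
    then show False
      using nz True by simp
  qed
  then show ?thesis
    using fmap_eq_zeroI[OF h] True by metis
qed

lemma fdag_fmap_eq_fmap:
  assumes u: "u \<in> Hom C d e" and h: "h \<in> Hom C d e" and b: "b \<in> Aut C d"
    and L: "valid_free C L" and m: "m \<in> fmod C L d"
    and supp: "\<And>i f. m i f \<noteq> (\<lambda>j. 0) \<Longrightarrow> Comp C u (Comp C b f) = Comp C h f"
  shows "fdag C L u (fmap C L h m) = fmap C L b m"
proof (rule ext, rule ext)
  fix i f
  have bd: "b \<in> Hom C d d"
    using b unfolding Aut_def .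
  show "fdag C L u (fmap C L h m) i f = fmap C L b m i f"
  proof (cases "i < length L \<and> f \<in> Hom C (summand_obj L i) d")
    case False
    then have "fdag C L u (fmap C L h m) i f = (\<lambda>j. 0)"
      using fdag_apply[OF u] by auto
    moreover have "fmap C L b m i f = (\<lambda>j. 0)"
      using False fmod_zero_outside[OF fmap_in_fmod[OF L bd m]] by blast
    ultimately show ?thesis
      by simp
  next
    case True
    then have i: "i < length L" and f: "f \<in> Hom C (summand_obj L i) d"
      by auto
    obtain f2 where f2: "f2 \<in> Hom C (summand_obj L i) d" "Comp C b f2 = f"
      using Aut_comp_surj[OF b f] by blast
    have "fdag C L u (fmap C L h m) i f = fmap C L h m i (Comp C u (Comp C b f2))"
      using fdag_apply[OF u] True f2(2) by simp
    also have "\<dots> = m i f2"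
      using fmap_apply_supported[OF u h bd i f2(1) supp] .
    also have "\<dots> = fmap C L b m i f"
      using fmap_apply[OF bd f2(1) i] f2(2) by simp
    finally show ?thesis .
  qed
qed

lemma fdag_fmap_eq_ezero:
  assumes u: "u \<in> Hom C d e" and h: "h \<in> Hom C d e"
    and supp: "\<And>i f. m i f \<noteq> (\<lambda>j. 0) \<Longrightarrow>
      \<not> (\<exists>f1\<in>Hom C (summand_obj L i) d. Comp C u f1 = Comp C h f)"
  shows "fdag C L u (fmap C L h m) = ezero"
proof (rule ext, rule ext)
  fix i f
  have "fmap C L h m i (Comp C u f) = (\<lambda>j. 0)" if f: "f \<in> Hom C (summand_obj L i) d"
    using fmap_eq_zeroI[OF h] supp f by metis
  then show "fdag C L u (fmap C L h m) i f = ezero i f"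
    using fdag_apply[OF u] unfolding ezero_def by simp
qed

lemma fdag_fmap_orbit_supported_eq_fmap:
  assumes LM: "valid_free C LM" and u: "u \<in> Hom C d e" and h: "h \<in> Hom C d e"
    and f0: "f0 \<in> Hom C (summand_obj LM k) d" and f1: "f1 \<in> Hom C (summand_obj LM k) d"
    and e1: "Comp C u f1 = Comp C h f0"
    and b: "b \<in> Aut C d" "Comp C b f0 = f1"
    and m0: "m0 \<in> fmod C LM d" and supp: "orbit_supported C LM k f0 m0"
  shows "fdag C LM u (fmap C LM h m0) = fmap C LM b m0"
proof (rule fdag_fmap_eq_fmap[OF u h b(1) LM m0])
  let ?c = "summand_obj LM k"
  have bd: "b \<in> Hom C d d"
    using b(1) unfolding Aut_def .
  fix i f
  assume "m0 i f \<noteq> (\<lambda>j. 0)"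
  then obtain a where a: "a \<in> Aut C ?c" "f = Comp C f0 a"
    using supp unfolding orbit_supported_def right_orbit_def by blast
  have ac: "a \<in> Hom C ?c ?c"
    using a(1) unfolding Aut_def .
  have "Comp C u (Comp C b f) = Comp C u (Comp C f1 a)"
    using a(2) b(2) comp_assoc[OF ac f0 bd] by simp
  also have "\<dots> = Comp C (Comp C h f0) a"
    using comp_assoc[OF ac f1 u] e1 by simp
  also have "\<dots> = Comp C h f"
    using comp_assoc[OF ac f0 h] a(2) by simp
  finally show "Comp C u (Comp C b f) = Comp C h f" .
qed

lemma fdag_fmap_orbit_supported_eq_ezero:
  assumes u: "u \<in> Hom C d e" and h: "h \<in> Hom C d e" and f0: "f0 \<in> Hom C (summand_obj LM k) d"
    and no_f1: "\<not> (\<exists>f1\<in>Hom C (summand_obj LM k) d. Comp C u f1 = Comp C h f0)"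
    and supp: "orbit_supported C LM k f0 m0"
  shows "fdag C LM u (fmap C LM h m0) = ezero"
proof (rule fdag_fmap_eq_ezero[OF u h])
  let ?c = "summand_obj LM k"
  fix i f
  assume "m0 i f \<noteq> (\<lambda>j. 0)"
  then obtain a where a: "i = k" "a \<in> Aut C ?c" "f = Comp C f0 a"
    using supp unfolding orbit_supported_def right_orbit_def by blast
  obtain a' where a': "a' \<in> Aut C ?c" "Comp C (Comp C f0 a) a' = f0"
    using comp_Aut_cancel[OF f0 a(2)] by blast
  have ac: "a \<in> Hom C ?c ?c" and a'c: "a' \<in> Hom C ?c ?c"
    using a(2) a'(1) unfolding Aut_def by auto
  show "\<not> (\<exists>f1\<in>Hom C (summand_obj LM i) d. Comp C u f1 = Comp C h f)"
  proof
    assume "\<exists>f1\<in>Hom C (summand_obj LM i) d. Comp C u f1 = Comp C h f"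
    then obtain f1 where f1: "f1 \<in> Hom C ?c d" "Comp C u f1 = Comp C h (Comp C f0 a)"
      using a(1,3) by blast
    have "Comp C u (Comp C f1 a') = Comp C (Comp C h (Comp C f0 a)) a'"
      using comp_assoc[OF a'c f1(1) u] f1(2) by simp
    also have "\<dots> = Comp C h f0"
      using comp_assoc[OF a'c comp_in_Hom[OF ac f0] h] a'(2) by simp
    finally show False
      using no_f1 comp_in_Hom[OF a'c f1(1)] by blast
  qed
qed

text \<open>The summand of \<open>\<Psi>(T)\<close> indexed by \<open>u = g \<circ> h\<close>, evaluated on \<open>h\<^sub>*m0\<close> at \<open>h \<circ> f'\<close>.\<close>
lemma fmap_fdag_fmap_orbit_supported:
  assumes LM: "valid_free C LM" and u: "u \<in> Hom C d e" and h: "h \<in> Hom C d e"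
    and T: "equivariant_linear C LM LN d T"
    and f0: "f0 \<in> Hom C (summand_obj LM k) d"
    and m0: "m0 \<in> fmod C LM d" and supp: "orbit_supported C LM k f0 m0"
    and i: "i < length LN" and f': "f' \<in> Hom C (summand_obj LN i) d"
  shows "fmap C LN u (T (fdag C LM u (fmap C LM h m0))) i (Comp C h f') =
    (if (\<exists>f1\<in>Hom C (summand_obj LM k) d. Comp C u f1 = Comp C h f0) \<and>
        (\<exists>f''\<in>Hom C (summand_obj LN i) d. Comp C u f'' = Comp C h f')
     then T m0 i f' else (\<lambda>j. 0))"
proof -
  consider (both) f1 f'' where "f1 \<in> Hom C (summand_obj LM k) d" "Comp C u f1 = Comp C h f0"
      "f'' \<in> Hom C (summand_obj LN i) d" "Comp C u f'' = Comp C h f'"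
    | (no_f'') "\<not> (\<exists>f''\<in>Hom C (summand_obj LN i) d. Comp C u f'' = Comp C h f')"
    | (no_f1) "\<not> (\<exists>f1\<in>Hom C (summand_obj LM k) d. Comp C u f1 = Comp C h f0)"
    by blast
  then show ?thesis
  proof cases
    case both
    obtain b where b: "b \<in> Aut C d" "Comp C b f0 = f1" "Comp C b f' = f''"
      using Aut_transport_pair[OF u h f0 both(1) f' both(3) both(2) both(4)] by blast
    have bd: "b \<in> Hom C d d"
      using b(1) unfolding Aut_def .
    have "fdag C LM u (fmap C LM h m0) = fmap C LM b m0"
      using fdag_fmap_orbit_supported_eq_fmap[OF LM u h f0 both(1,2) b(1,2) m0 supp] .
    then have "T (fdag C LM u (fmap C LM h m0)) = fmap C LN b (T m0)"
      using T b(1) m0 unfolding equivariant_linear_def by simp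
    then have "fmap C LN u (T (fdag C LM u (fmap C LM h m0))) i (Comp C h f') =
        fmap C LN b (T m0) i f''"
      using fmap_apply[OF u both(3) i] both(4) by simp
    also have "\<dots> = T m0 i f'"
      using fmap_apply[OF bd f' i] b(3) by simp
    finally show ?thesis
      using both by auto
  next
    case no_f''
    then show ?thesis
      using fmap_outside_image[OF u] by metis
  next
    case no_f1
    have "T ezero = ezero"
      using fmod_linear_ezero[OF LM] T unfolding equivariant_linear_def by blast
    then have "fmap C LN u (T (fdag C LM u (fmap C LM h m0))) = ezero"
      using fdag_fmap_orbit_supported_eq_ezero[OF u h f0 no_f1 supp] fmap_ezero by simp
    then show ?thesis
      using no_f1 unfolding ezero_def by simp
  qed
qed

lemma Psi_fmap_orbit_supported:
  assumes LM: "valid_free C LM"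
    and h_def: "h = (SOME h. h \<in> Hom C d e)" and h: "h \<in> Hom C d e"
    and T: "equivariant_linear C LM LN d T"
    and f0: "f0 \<in> Hom C (summand_obj LM k) d"
    and m0: "m0 \<in> fmod C LM d" and supp: "orbit_supported C LM k f0 m0"
    and i: "i < length LN" and f': "f' \<in> Hom C (summand_obj LN i) d"
  shows "Psi C LM LN d e T (fmap C LM h m0) i (Comp C h f') j =
    of_nat (card {g\<in>Aut C e. (\<exists>f1\<in>Hom C (summand_obj LM k) d. Comp C (Comp C g h) f1 = Comp C h f0) \<and>
                             (\<exists>f''\<in>Hom C (summand_obj LN i) d. Comp C (Comp C g h) f'' = Comp C h f')})
    / of_nat (card (Aut C e)) * T m0 i f' j"
proof -
  let ?P = "\<lambda>g. (\<exists>f1\<in>Hom C (summand_obj LM k) d. Comp C (Comp C g h) f1 = Comp C h f0) \<and>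
                (\<exists>f''\<in>Hom C (summand_obj LN i) d. Comp C (Comp C g h) f'' = Comp C h f')"
  let ?term = "\<lambda>g. fmap C LN (Comp C g h) (T (fdag C LM (Comp C g h) (fmap C LM h m0))) i (Comp C h f') j"
  have e: "e \<in> Obj C"
    using Hom_objs[OF h] by blast
  have fin: "finite (Aut C e)"
    unfolding Aut_def using finite_Hom[OF e e] .
  have "Psi C LM LN d e T (fmap C LM h m0) i (Comp C h f') j =
      1 / of_nat (card (Aut C e)) * (\<Sum>g\<in>Aut C e. ?term g)"
    unfolding Psi_def using fmap_in_fmod[OF LM h m0] h_def by (simp add: Let_def)
  also have "(\<Sum>g\<in>Aut C e. ?term g) = (\<Sum>g\<in>Aut C e. if ?P g then T m0 i f' j else 0)"
  proof (rule sum.cong)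
    fix g
    assume "g \<in> Aut C e"
    then have "Comp C g h \<in> Hom C d e"
      using comp_in_Hom[OF h] unfolding Aut_def by blast
    then show "?term g = (if ?P g then T m0 i f' j else 0)"
      using fmap_fdag_fmap_orbit_supported[OF LM _ h T f0 m0 supp i f'] by simp
  qed simp
  also have "\<dots> = of_nat (card {g\<in>Aut C e. ?P g}) * T m0 i f' j"
    using sum.inter_filter[OF fin, of "\<lambda>_. T m0 i f' j" ?P] by simp
  finally show ?thesis
    by simp
qed

lemma Psi_eq_imp_eq_on_orbit_supported:
  assumes LM: "valid_free C LM" and ne: "Hom C d e \<noteq> {}"
    and T1: "equivariant_linear C LM LN d T1" and T2: "equivariant_linear C LM LN d T2"
    and Psi_eq: "Psi C LM LN d e T1 = Psi C LM LN d e T2"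
    and f0: "f0 \<in> Hom C (summand_obj LM k) d"
    and m0: "m0 \<in> fmod C LM d" and supp: "orbit_supported C LM k f0 m0"
  shows "T1 m0 = T2 m0"
proof (rule ext, rule ext, rule ext)
  fix i f' j
  define h where "h = (SOME h. h \<in> Hom C d e)"
  have h: "h \<in> Hom C d e"
    unfolding h_def using ne some_in_eq by blast
  have x1: "T1 m0 \<in> fmod C LN d" and x2: "T2 m0 \<in> fmod C LN d"
    using T1 T2 m0 unfolding equivariant_linear_def by auto
  show "T1 m0 i f' j = T2 m0 i f' j"
  proof (cases "i < length LN \<and> f' \<in> Hom C (summand_obj LN i) d")
    case False
    then show ?thesis
      using fmod_zero_outside[OF x1] fmod_zero_outside[OF x2] by metis
  next
    case True
    then have i: "i < length LN" and f': "f' \<in> Hom C (summand_obj LN i) d"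
      by auto
    let ?S = "{g\<in>Aut C e. (\<exists>f1\<in>Hom C (summand_obj LM k) d. Comp C (Comp C g h) f1 = Comp C h f0) \<and>
                          (\<exists>f''\<in>Hom C (summand_obj LN i) d. Comp C (Comp C g h) f'' = Comp C h f')}"
    have e: "e \<in> Obj C"
      using Hom_objs[OF h] by blast
    have fin: "finite (Aut C e)"
      unfolding Aut_def using finite_Hom[OF e e] .
    have "Idt C e \<in> ?S"
      using Idt_in_Hom[OF e] comp_Idt_left[OF h] f0 f' unfolding Aut_def by auto
    then have "card ?S \<noteq> 0"
      using fin by (metis (no_types, lifting) card_0_eq empty_iff finite_subset mem_Collect_eq subsetI)
    moreover have "card (Aut C e) \<noteq> 0"
      using fin \<open>Idt C e \<in> ?S\<close> by auto
    moreover have "of_nat (card ?S) / of_nat (card (Aut C e)) * T1 m0 i f' j =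
        of_nat (card ?S) / of_nat (card (Aut C e)) * (T2 m0 i f' j :: complex)"
      using Psi_fmap_orbit_supported[OF LM h_def h T1 f0 m0 supp i f', of j]
        Psi_fmap_orbit_supported[OF LM h_def h T2 f0 m0 supp i f', of j] Psi_eq by metis
    ultimately show ?thesis
      by simp
  qed
qed

lemma inj_on_Psi_HomG:
  assumes LM: "valid_free C LM" and X: "is_submodule C LN X" and de: "obj_le C d e"
  shows "inj_on (Psi C LM LN d e) (HomG C LM LN X d)"
proof (rule inj_onI)
  fix T1 T2
  assume T1: "T1 \<in> HomG C LM LN X d" and T2: "T2 \<in> HomG C LM LN X d"
    and Psi_eq: "Psi C LM LN d e T1 = Psi C LM LN d e T2"
  have ne: "Hom C d e \<noteq> {}"
    using de unfolding obj_le_def .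
  then have d: "d \<in> Obj C"
    using Hom_objs by blast
  have lin1: "equivariant_linear C LM LN d T1" and lin2: "equivariant_linear C LM LN d T2"
    using HomG_equivariant_linear[OF X d] T1 T2 by auto
  have "T1 m = T2 m" if "m \<in> fmod C LM d" for m
    using eq_on_fmod_if_eq_on_orbit_supported[OF LM d _ _ _ that]
      Psi_eq_imp_eq_on_orbit_supported[OF LM ne lin1 lin2 Psi_eq] lin1 lin2
    unfolding equivariant_linear_def by blast
  moreover have "T1 m = T2 m" if "m \<notin> fmod C LM d" for m
    using that T1 T2 unfolding HomG_def by simp
  ultimately show "T1 = T2"
    by blast
qed

end

theorem mainTheorem16:
  fixes C :: "('o,'m) category"
    and LM LN :: "('o,'m) free_spec"
    and X :: "'o \<Rightarrow> 'm elt set"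
    and c1 c2 d e :: 'o
  assumes "FI_type C"
    and "c1 \<in> Obj C" and "c2 \<in> Obj C"
    and "valid_free C LM" and "free_deg_le C LM c1"
    and "valid_free C LN" and "free_deg_le C LN c2"
    and "is_submodule C LN X"
    and "d \<in> Obj C" and "e \<in> Obj C"
    and "obj_le C d e" and "geq_sum C d c1 c2"
  shows "inj_on (Psi C LM LN d e) (HomG C LM LN X d)"
proof -
  interpret FI_category C
    using assms(1) by unfold_locales
  show ?thesis
    using inj_on_Psi_HomG assms(4,8,11) .
qed

end
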